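(* Let $N\ge 1$ and $1\le K\le N$ be integers and $\lambda_s,\lambda_d,c>0$. Let $T_1,\dots,T_N$ be i.i.d. with CDF $1-e^{-\lambda_s(t-c)}$ for $t>c$, let $T_{\mathrm D}$ be independent of them with density $\lambda_d e^{-\lambda_d(t-c)}$ for $t>c$, let $T_N(h)$ denote the $h$-th smallest of $T_1,\dots,T_N$, and fix $n\in\{1,\dots,N\}$. Let $$\mathcal C_{\mathrm S,2}=\{T_{\mathrm D}<T_N(K)\}\cap\{T_n\le\min\{T_{\mathrm D},T_N(K)\}\},$$ assumed to have positive probability. For $1\le h\le N$ and $0\le j\le h-1$ put $B_{h,j}=h\binom{N}{h}\binom{h-1}{j}(-1)^j$, $U_{h,j}=N-h+1+j$, $H_{h,j}=\lambda_sU_{h,j}+\lambda_d$, and $\mathcal R_h=\sum_{j=0}^{h-1}B_{h,j}\big(\frac{1}{U_{h,j}}-\frac{\lambda_s}{H_{h,j}}\big)$. Then $$\mathbb E[T_{\mathrm D}\mid\mathcal C_{\mathrm S,2}]=\frac{1}{K\mathcal R_K-\sum_{h=1}^K\mathcal R_h}\Big(K\sum_{j=0}^{K-1}B_{K,j}\lambda_d\frac{cH_{K,j}+1}{U_{K,j}H_{K,j}^2}-\sum_{h=1}^{K}\sum_{j=0}^{h-1}B_{h,j}\lambda_d\frac{cH_{h,j}+1}{U_{h,j}H_{h,j}^2}\Big),$$ $$\mathbb E[T_{\mathrm D}^2\mid\mathcal C_{\mathrm S,2}]=\frac{1}{K\mathcal R_K-\sum_{h=1}^K\mathcal R_h}\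Big(K\sum_{j=0}^{K-1}B_{K,j}\lambda_d\frac{c^2H_{K,j}^2+2cH_{K,j}+2}{U_{K,j}H_{K,j}^3}-\sum_{h=1}^{K}\sum_{j=0}^{h-1}B_{h,j}\lambda_d\frac{c^2H_{h,j}^2+2cH_{h,j}+2}{U_{h,j}H_{h,j}^3}\Big).$$
   Context: Model: an access point multicasts a status update with a random (shifted exponential) deadline $T_{\mathrm D}$ to $N$ devices with i.i.d. shifted-exponential delivery times; transmission terminates at $\min\{T_{\mathrm D},T_N(K)\}$. $\mathcal C_{\mathrm S,2}$ is the event that device $n$ receives the update and the transmission stops because the deadline expired before $K$ devices received it. *)

theory Defs
  imports "HOL-Probability.Probability"
begin

definition order_stat :: "nat \<Rightarrow> (nat \<Rightarrow> 'a \<Rightarrow> real) \<Rightarrow> nat \<Rightarrow> 'a \<Rightarrow> real" where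
  "order_stat N T h x = sort (map (\<lambda>i. T i x) [1..<N+1]) ! (h - 1)"

definition cond_exp_event :: "'a measure \<Rightarrow> ('a \<Rightarrow> real) \<Rightarrow> 'a set \<Rightarrow> real" where
  "cond_exp_event M X C = (\<integral>x. indicator C x * X x \<partial>M) / measure M C"

definition Bc :: "nat \<Rightarrow> nat \<Rightarrow> nat \<Rightarrow> real" where
  "Bc N h j = real h * real (N choose h) * real ((h - 1) choose j) * (-1) ^ j"

definition Uc :: "nat \<Rightarrow> nat \<Rightarrow> nat \<Rightarrow> real" where
  "Uc N h j = real N - real h + 1 + real j"

definition Hc :: "real \<Rightarrow> real \<Rightarrow> nat \<Rightarrow> nat \<Rightarrow> nat \<Rightarrow> real" where
  "Hc ls ld N h j = ls * Uc N h j + ld"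

definition Rc :: "real \<Rightarrow> real \<Rightarrow> nat \<Rightarrow> nat \<Rightarrow> real" where
  "Rc ls ld N h = (\<Sum>j<h. Bc N h j * (1 / Uc N h j - ls / Hc ls ld N h j))"

end

theory Submission
  imports Defs "HOL-Real_Asymp.Real_Asymp"
begin

text \<open>
  Let F be the common distribution function of the T_i. The event C_S2 says that T_n <= T_D
  and that fewer than K of the T_i are <= T_D. Freezing the independent T_D at t, this has
  probability F(t) P(Bin(N-1, F(t)) < K-1), so E[1_C T_D^k] is the integral of
  t^k f_D(t) F(t) P(Bin(N-1, F(t)) < K-1). The identity
    N p P(Bin(N-1, p) < K-1) = K P(Bin(N, p) < K) - (sum over h = 1..K of P(Bin(N, p) < h))
  together with the expansion of P(Bin(N, p) < h) in powers of 1 - p = exp(-ls (t - c)), which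
  holds because both sides have the same derivative in p, turns f_D(t) F(t) P(...) into a signed
  mixture of exponential densities with rates H_{h,j}. Integrating t^k against each of them
  gives the closed forms for k = 0, 1, 2, and the conditional moments are the quotients of the
  k = 1, 2 moments by the k = 0 one.
\<close>

section \<open>Order statistics\<close>

lemma less_sorted_nth_iff_length_filter:
  fixes ys :: "'a::linorder list"
  assumes sorted: "sorted ys" and k: "1 \<le> k" "k \<le> length ys"
  shows "t < ys ! (k - 1) \<longleftrightarrow> length (filter (\<lambda>y. y \<le> t) ys) < k"
proof -
  let ?below = "{i. i < length ys \<and> ys ! i \<le> t}"
  have len: "length (filter (\<lambda>y. y \<le> t) ys) = card ?below"
    by (simp add: length_filter_conv_card)
  show ?thesis
  proof
    assume lt: "t < ys ! (k - 1)"
    have "?below \<subseteq> {..<k - 1}"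
    proof
      fix i assume i: "i \<in> ?below"
      show "i \<in> {..<k - 1}"
      proof (rule ccontr)
        assume "i \<notin> {..<k - 1}"
        then have "ys ! (k - 1) \<le> ys ! i" using i sorted by (intro sorted_nth_mono) auto
        then show False using i lt by auto
      qed
    qed
    then have "card ?below \<le> k - 1"
      by (metis card_lessThan card_mono finite_lessThan)
    then show "length (filter (\<lambda>y. y \<le> t) ys) < k" using k len by simp
  next
    assume few: "length (filter (\<lambda>y. y \<le> t) ys) < k"
    show "t < ys ! (k - 1)"
    proof (rule ccontr)
      assume "\<not> t < ys ! (k - 1)"
      then have "ys ! i \<le> t" if "i < k" for i
        using that k by (auto simp: not_less intro!: order_trans[OF sorted_nth_mono[OF sorted, of i "k - 1"]])
      then have "{..<k} \<subseteq> ?below"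
        using k by auto
      then have "k \<le> card ?below"
        by (metis card_lessThan card_mono finite_Collect_conjI finite_Collect_less_nat)
      then show False using few len by simp
    qed
  qed
qed

lemma less_order_stat_iff_card:
  assumes "1 \<le> K" "K \<le> N"
  shows "t < order_stat N T K x \<longleftrightarrow> card {i \<in> {1..N}. T i x \<le> t} < K"
proof -
  let ?xs = "map (\<lambda>i. T i x) [1..<N+1]"
  have "t < order_stat N T K x \<longleftrightarrow> length (filter (\<lambda>y. y \<le> t) (sort ?xs)) < K"
    unfolding order_stat_def using assms by (intro less_sorted_nth_iff_length_filter) auto
  also have "length (filter (\<lambda>y. y \<le> t) (sort ?xs)) = length (filter (\<lambda>y. y \<le> t) ?xs)"
    by (metis mset_filter mset_sort size_mset)
  also have "\<dots> = length (filter (\<lambda>i. T i x \<le> t) [1..<N+1])"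
    by (simp add: filter_map comp_def)
  also have "\<dots> = card {i \<in> {1..N}. T i x \<le> t}"
    by (subst distinct_length_filter) (auto intro!: arg_cong[where f = card])
  finally show ?thesis .
qed

section \<open>Binomial tail probabilities\<close>

definition binomial_less :: "nat \<Rightarrow> nat \<Rightarrow> real \<Rightarrow> real" where
  "binomial_less n h p = (\<Sum>m<h. real (n choose m) * p ^ m * (1 - p) ^ (n - m))"

lemma binomial_less_Suc:
  "binomial_less n (Suc h) p = binomial_less n h p + real (n choose h) * p ^ h * (1 - p) ^ (n - h)"
  by (simp add: binomial_less_def)

lemma binomial_less_nonneg: "0 \<le> p \<Longrightarrow> p \<le> 1 \<Longrightarrow> 0 \<le> binomial_less n h p"
  unfolding binomial_less_def by (intro sum_nonneg) simp

lemma has_real_derivative_binomial_less_compl: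
  "((\<lambda>q. binomial_less n h (1 - q)) has_real_derivative
     real h * real (n choose h) * q ^ (n - h) * (1 - q) ^ (h - 1)) (at q)"
proof (induction h)
  case 0
  then show ?case by (simp add: binomial_less_def)
next
  case (Suc h)
  have "((\<lambda>q. real (n choose h) * (1 - q) ^ h * q ^ (n - h)) has_real_derivative
      real (n choose h) * (real (n - h) * q ^ (n - h - 1) * (1 - q) ^ h
                           - real h * (1 - q) ^ (h - 1) * q ^ (n - h))) (at q)"
    by (auto intro!: derivative_eq_intros simp: algebra_simps)
  from DERIV_add[OF Suc.IH this]
  have "((\<lambda>q. binomial_less n (Suc h) (1 - q)) has_real_derivative
      (real (n - h) * real (n choose h)) * q ^ (n - Suc h) * (1 - q) ^ h) (at q)"
    by (simp add: binomial_less_Suc algebra_simps)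
  moreover have "real (n - h) * real (n choose h) = real (Suc h) * real (n choose Suc h)"
    by (metis binomial_absorb_comp binomial_absorption of_nat_mult)
  ultimately show ?case by simp
qed

lemma sum_Bc_mult_power:
  assumes "1 \<le> h"
  shows "(\<Sum>j<h. Bc n h j * q ^ (n - h + j)) = real h * real (n choose h) * q ^ (n - h) * (1 - q) ^ (h - 1)"
proof -
  have "(1 - q) ^ (h - 1) = (\<Sum>j\<le>h - 1. real ((h - 1) choose j) * (- q) ^ j * 1 ^ (h - 1 - j))"
    using binomial_ring[of "- q" 1 "h - 1"] by simp
  also have "\<dots> = (\<Sum>j<h. real ((h - 1) choose j) * (- 1) ^ j * q ^ j)"
    using assms by (intro sum.cong) (auto simp: power_minus')
  finally show ?thesis
    by (simp add: sum_distrib_left Bc_def power_add algebra_simps)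
qed

lemma binomial_less_compl_eq_sum_Bc:
  assumes "1 \<le> h" "h \<le> n"
  shows "binomial_less n h (1 - q) = (\<Sum>j<h. Bc n h j * q ^ (n - h + 1 + j) / Uc n h j)"
proof -
  let ?G = "\<lambda>q. \<Sum>j<h. Bc n h j * q ^ (n - h + 1 + j) / Uc n h j"
  have G: "(?G has_real_derivative real h * real (n choose h) * q ^ (n - h) * (1 - q) ^ (h - 1)) (at q)" for q
  proof -
    have "((\<lambda>q. Bc n h j * q ^ (n - h + 1 + j) / Uc n h j) has_real_derivative
        Bc n h j * q ^ (n - h + j)) (at q)" for j
    proof -
      have "((\<lambda>q. Bc n h j * q ^ (n - h + 1 + j) / Uc n h j) has_real_derivative
          Bc n h j * (real (n - h + 1 + j) * q ^ (n - h + 1 + j - Suc 0)) / Uc n h j) (at q)"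
        by (intro DERIV_cdivide DERIV_cmult DERIV_pow)
      moreover have "Uc n h j = real (n - h + 1 + j)" using assms by (simp add: Uc_def)
      ultimately show ?thesis by simp
    qed
    then have "(?G has_real_derivative (\<Sum>j<h. Bc n h j * q ^ (n - h + j))) (at q)"
      by (rule DERIV_sum)
    then show ?thesis using sum_Bc_mult_power[OF assms(1)] by simp
  qed
  have "\<forall>q. ((\<lambda>q. binomial_less n h (1 - q) - ?G q) has_real_derivative 0) (at q)"
  proof
    fix q
    show "((\<lambda>q. binomial_less n h (1 - q) - ?G q) has_real_derivative 0) (at q)"
      using DERIV_diff[OF has_real_derivative_binomial_less_compl[of n h q] G[of q]] by simp
  qed
  from DERIV_isconst_all[OF this, of q 0]
  have "binomial_less n h (1 - q) - ?G q = binomial_less n h (1 - 0) - ?G 0" .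
  moreover have "binomial_less n h 1 = 0"
    using assms by (auto simp: binomial_less_def intro!: sum.neutral)
  ultimately show ?thesis by simp
qed

lemma binomial_less_telescope:
  assumes "1 \<le> K"
  shows "real n * p * binomial_less (n - 1) (K - 1) p
           = real K * binomial_less n K p - (\<Sum>h\<in>{1..K}. binomial_less n h p)"
  using assms
proof (induction K rule: nat_induct_at_least)
  case base
  then show ?case by (simp add: binomial_less_def)
next
  case (Suc K)
  have "real n * real ((n - 1) choose (K - 1)) = real K * real (n choose K)"
    using times_binomial_minus1_eq[of K n] Suc.hyps by (metis of_nat_mult not_one_le_zero neq0_conv)
  moreover have "p * p ^ (K - 1) = p ^ K" "n - 1 - (K - 1) = n - K"
    using Suc.hyps by (simp_all add: power_eq_if)
  ultimately have "real n * p * (real ((n - 1) choose (K - 1)) * p ^ (K - 1) * (1 - p) ^ (n - 1 - (K - 1)))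
      = real K * (real (n choose K) * p ^ K * (1 - p) ^ (n - K))"
    by (metis (no_types, lifting) mult.assoc mult.left_commute)
  moreover have "binomial_less (n - 1) (Suc K - 1) p = binomial_less (n - 1) (K - 1) p
      + real ((n - 1) choose (K - 1)) * p ^ (K - 1) * (1 - p) ^ (n - 1 - (K - 1))"
    using binomial_less_Suc[of "n - 1" "K - 1" p] Suc.hyps by simp
  ultimately show ?case
    using Suc.IH by (simp add: binomial_less_Suc algebra_simps)
qed

section \<open>Counting independent threshold events\<close>

lemma sum_subsets_containing_card_less:
  fixes a b :: real
  assumes fin: "finite I" and n: "n \<in> I"
  shows "(\<Sum>S | S \<subseteq> I \<and> n \<in> S \<and> card S < K. a ^ card S * b ^ (card I - card S))
       = a * (\<Sum>m<K - 1. real ((card I - 1) choose m) * a ^ m * b ^ (card I - 1 - m))"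
proof -
  let ?I' = "I - {n}"
  let ?f = "\<lambda>m. a ^ Suc m * b ^ (card I - 1 - m)"
  have fin': "finite ?I'" using fin by simp
  have "(\<Sum>S | S \<subseteq> I \<and> n \<in> S \<and> card S < K. a ^ card S * b ^ (card I - card S))
      = (\<Sum>S' | S' \<subseteq> ?I' \<and> card S' < K - 1. ?f (card S'))"
  proof (rule sum.reindex_bij_witness[of _ "insert n" "\<lambda>S. S - {n}"])
    fix S assume S: "S \<in> {S. S \<subseteq> I \<and> n \<in> S \<and> card S < K}"
    then have "finite S" using fin finite_subset by blast
    moreover have "card S = Suc (card (S - {n}))"
      using S \<open>finite S\<close> by (intro card_Suc_Diff1[symmetric]) auto
    ultimately show "insert n (S - {n}) = S" "S - {n} \<in> {S'. S' \<subseteq> ?I' \<and> card S' < K - 1}"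
      and "?f (card (S - {n})) = a ^ card S * b ^ (card I - card S)"
      using S by auto
  next
    fix S' assume S': "S' \<in> {S'. S' \<subseteq> ?I' \<and> card S' < K - 1}"
    then have "finite S'" "n \<notin> S'" using fin' finite_subset by blast+
    then show "insert n S' - {n} = S'" "insert n S' \<in> {S. S \<subseteq> I \<and> n \<in> S \<and> card S < K}"
      using S' n by auto
  qed
  also have "\<dots> = (\<Sum>m<K - 1. \<Sum>S' | S' \<subseteq> ?I' \<and> card S' < K - 1 \<and> card S' = m. ?f m)"
    using fin' by (subst sum.group[symmetric, of _ "{..<K - 1}" card]) auto
  also have "\<dots> = (\<Sum>m<K - 1. \<Sum>S' | S' \<subseteq> ?I' \<and> card S' = m. ?f m)"
    by (intro sum.cong refl Collect_cong) auto
  also have "\<dots> = (\<Sum>m<K - 1. real ((card I - 1) choose m) * ?f m)"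
    using n_subsets[OF fin'] fin n by simp
  finally show ?thesis
    by (simp add: sum_distrib_left mult_ac)
qed

lemma set_of_le_eq_INT:
  fixes X :: "'i \<Rightarrow> 'a \<Rightarrow> real"
  assumes "I \<noteq> {}" and "S \<subseteq> I"
  shows "{x \<in> space M. {i \<in> I. X i x \<le> t} = S}
           = (\<Inter>i\<in>I. X i -` (if i \<in> S then {..t} else {t<..}) \<inter> space M)"
  using assms by (auto simp: not_le split: if_splits)

context prob_space
begin

lemma prob_set_of_le_eq:
  fixes X :: "'i \<Rightarrow> 'a \<Rightarrow> real"
  assumes fin: "finite I" "I \<noteq> {}" and S: "S \<subseteq> I"
    and indep: "indep_vars (\<lambda>_. borel) X I"
    and cdf: "\<And>i. i \<in> I \<Longrightarrow> prob {x \<in> space M. X i x \<le> t} = p"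
  shows "prob {x \<in> space M. {i \<in> I. X i x \<le> t} = S} = p ^ card S * (1 - p) ^ (card I - card S)"
proof -
  let ?A = "\<lambda>i. if i \<in> S then {..t} else {t<..}"
  have rv: "X i \<in> borel_measurable M" if "i \<in> I" for i
    using indep that by (auto simp: indep_vars_def)
  have "prob {x \<in> space M. {i \<in> I. X i x \<le> t} = S} = (\<Prod>i\<in>I. prob (X i -` ?A i \<inter> space M))"
    unfolding set_of_le_eq_INT[OF fin(2) S] by (rule indep_varsD[OF indep]) (use fin in auto)
  also have "\<dots> = (\<Prod>i\<in>I. if i \<in> S then p else 1 - p)"
  proof (intro prod.cong refl)
    fix i assume i: "i \<in> I"
    have "{x \<in> space M. X i x \<le> t} \<in> events" using rv[OF i] by measurable
    moreover have "X i -` {t<..} \<inter> space M = space M - {x \<in> space M. X i x \<le> t}" by auto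
    ultimately show "prob (X i -` ?A i \<inter> space M) = (if i \<in> S then p else 1 - p)"
      using cdf[OF i] prob_compl by (auto simp: vimage_def Int_def conj_commute)
  qed
  also have "\<dots> = p ^ card S * (1 - p) ^ (card I - card S)"
    using S fin by (simp add: prod.If_cases Int_absorb1 card_Diff_subset finite_subset Diff_eq[symmetric])
  finally show ?thesis .
qed

lemma prob_le_and_card_le_less:
  fixes X :: "'i \<Rightarrow> 'a \<Rightarrow> real"
  assumes fin: "finite I" and n: "n \<in> I"
    and indep: "indep_vars (\<lambda>_. borel) X I"
    and cdf: "\<And>i. i \<in> I \<Longrightarrow> prob {x \<in> space M. X i x \<le> t} = p"
  shows "prob {x \<in> space M. X n x \<le> t \<and> card {i \<in> I. X i x \<le> t} < K}
           = p * binomial_less (card I - 1) (K - 1) p"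
proof -
  let ?Subsets = "{S. S \<subseteq> I \<and> n \<in> S \<and> card S < K}"
  let ?E = "\<lambda>S. {x \<in> space M. {i \<in> I. X i x \<le> t} = S}"
  have rv: "X i \<in> borel_measurable M" if "i \<in> I" for i
    using indep that by (auto simp: indep_vars_def)
  have "I \<noteq> {}" using n by auto
  have E: "?E S \<in> events" if "S \<subseteq> I" for S
    unfolding set_of_le_eq_INT[OF \<open>I \<noteq> {}\<close> that] using n fin rv by (intro sets.finite_INT) auto
  have "{x \<in> space M. X n x \<le> t \<and> card {i \<in> I. X i x \<le> t} < K} = (\<Union>S\<in>?Subsets. ?E S)"
    using n by auto
  moreover have "finite ?Subsets"
    using fin by (auto intro: finite_subset[of _ "Pow I"])
  ultimately have "prob {x \<in> space M. X n x \<le> t \<and> card {i \<in> I. X i x \<le> t} < K} = (\<Sum>S\<in>?Subsets. prob (?E S))"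
    using E by (auto simp: disjoint_family_on_def intro!: finite_measure_finite_Union)
  also have "\<dots> = (\<Sum>S\<in>?Subsets. p ^ card S * (1 - p) ^ (card I - card S))"
    using fin n by (intro sum.cong refl prob_set_of_le_eq[OF fin _ _ indep cdf]) auto
  also have "\<dots> = p * binomial_less (card I - 1) (K - 1) p"
    unfolding sum_subsets_containing_card_less[OF fin n] binomial_less_def ..
  finally show ?thesis .
qed

lemma nn_integral_indep_var:
  assumes indep: "indep_var S X T Y"
    and \<phi>[measurable]: "\<phi> \<in> borel_measurable (S \<Otimes>\<^sub>M T)"
  shows "(\<integral>\<^sup>+x. \<phi> (X x, Y x) \<partial>M) = (\<integral>\<^sup>+x. \<integral>\<^sup>+y. \<phi> (X x, Y y) \<partial>M \<partial>M)"
proof -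
  have [measurable]: "X \<in> measurable M S" "Y \<in> measurable M T"
    using indep by (auto dest: indep_var_rv1 indep_var_rv2)
  interpret Y: prob_space "distr M T Y" by (rule prob_space_distr) measurable
  have "(\<integral>\<^sup>+x. \<phi> (X x, Y x) \<partial>M) = (\<integral>\<^sup>+z. \<phi> z \<partial>distr M (S \<Otimes>\<^sub>M T) (\<lambda>x. (X x, Y x)))"
    by (rule nn_integral_distr[symmetric]) measurable
  also have "distr M (S \<Otimes>\<^sub>M T) (\<lambda>x. (X x, Y x)) = distr M S X \<Otimes>\<^sub>M distr M T Y"
    using indep by (simp add: indep_var_distribution_eq)
  also have "(\<integral>\<^sup>+z. \<phi> z \<partial>(distr M S X \<Otimes>\<^sub>M distr M T Y))
      = (\<integral>\<^sup>+w. \<integral>\<^sup>+v. \<phi> (w, v) \<partial>distr M T Y \<partial>distr M S X)"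
    by (rule Y.nn_integral_fst[symmetric])
       (simp add: measurable_cong_sets[OF sets_pair_measure_cong[OF sets_distr sets_distr] refl])
  also have "\<dots> = (\<integral>\<^sup>+x. \<integral>\<^sup>+v. \<phi> (X x, v) \<partial>distr M T Y \<partial>M)"
    by (rule nn_integral_distr) measurable
  also have "\<dots> = (\<integral>\<^sup>+x. \<integral>\<^sup>+y. \<phi> (X x, Y y) \<partial>M \<partial>M)"
    by (intro nn_integral_cong nn_integral_distr) measurable
  finally show ?thesis .
qed

end

lemma pred_le_and_card_le_less:
  assumes "finite I" "n \<in> I"
  shows "Measurable.pred (borel \<Otimes>\<^sub>M PiM I (\<lambda>_. borel))
           (\<lambda>(t, y). y n \<le> (t::real) \<and> card {i \<in> I. y i \<le> t} < K)"
proof -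
  have eq: "(\<lambda>(t, y). y n \<le> (t::real) \<and> card {i \<in> I. y i \<le> t} < K)
      = (\<lambda>(t, y). y n \<le> t \<and> (\<Sum>i\<in>I. of_bool (y i \<le> t)) < real K)"
    using assms(1) by (auto simp: Int_def conj_commute)
  show ?thesis
    unfolding eq using assms(2) by measurable
qed

section \<open>Mixtures of shifted exponential densities\<close>

lemma has_integral_atLeast_antiderivative:
  fixes f F :: "real \<Rightarrow> real"
  assumes deriv: "\<And>t. (F has_real_derivative f t) (at t)"
    and cont: "continuous_on UNIV f"
    and lim: "(F \<longlongrightarrow> 0) at_top"
    and nonneg: "\<And>t. t \<ge> c \<Longrightarrow> f t \<ge> 0"
  shows "(f has_integral - F c) {c..}"
proof (rule has_integral_to_inf)
  show "f integrable_on {c..y}" for y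
    by (rule integrable_continuous_interval) (rule continuous_on_subset[OF cont], auto)
  have "\<forall>\<^sub>F y in at_top. integral {c..y} f = F y - F c"
  proof (rule eventually_at_top_linorderI[of c])
    fix y assume "c \<le> y"
    then have "(f has_integral (F y - F c)) {c..y}"
      by (intro fundamental_theorem_of_calculus)
         (auto intro: has_field_derivative_at_within[OF deriv]
               simp flip: has_real_derivative_iff_has_vector_derivative)
    then show "integral {c..y} f = F y - F c" by blast
  qed
  moreover have "((\<lambda>y. F y - F c) \<longlongrightarrow> 0 - F c) at_top"
    by (intro tendsto_intros lim)
  ultimately show "((\<lambda>y. integral {c..y} f) \<longlongrightarrow> - F c) at_top"
    by (simp add: filterlim_cong tendsto_cong)
qed (use nonneg in auto)

lemma has_integral_shifted_exp:
  fixes a c :: real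
  assumes "a > 0"
  shows "((\<lambda>t. exp (-a * (t - c))) has_integral (1 / a)) {c..}"
proof -
  let ?F = "\<lambda>t. - exp (-a * (t - c)) / a"
  have "((\<lambda>t. exp (-a * (t - c))) has_integral - ?F c) {c..}"
  proof (rule has_integral_atLeast_antiderivative[where F = ?F])
    show "(?F has_real_derivative exp (-a * (t - c))) (at t)" for t
      using assms by (auto intro!: derivative_eq_intros)
    show "(?F \<longlongrightarrow> 0) at_top" using assms by real_asymp
  qed (auto intro!: continuous_intros)
  then show ?thesis by simp
qed

lemma has_integral_mult_shifted_exp:
  fixes a c :: real
  assumes "a > 0" and "c \<ge> 0"
  shows "((\<lambda>t. t * exp (-a * (t - c))) has_integral ((c * a + 1) / a^2)) {c..}"
proof -
  let ?F = "\<lambda>t. - (t / a + 1 / a^2) * exp (-a * (t - c))"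
  have "((\<lambda>t. t * exp (-a * (t - c))) has_integral - ?F c) {c..}"
  proof (rule has_integral_atLeast_antiderivative[where F = ?F])
    show "(?F has_real_derivative t * exp (-a * (t - c))) (at t)" for t
      using assms by (auto intro!: derivative_eq_intros simp: field_simps power2_eq_square)
    show "(?F \<longlongrightarrow> 0) at_top" using assms by real_asymp
  qed (use assms in \<open>auto intro!: continuous_intros\<close>)
  moreover have "- ?F c = (c * a + 1) / a^2"
    using assms by (simp add: field_simps power2_eq_square)
  ultimately show ?thesis by simp
qed

lemma has_integral_power2_mult_shifted_exp:
  fixes a c :: real
  assumes "a > 0"
  shows "((\<lambda>t. t^2 * exp (-a * (t - c))) has_integral ((c^2 * a^2 + 2 * c * a + 2) / a^3)) {c..}"
proof -
  let ?F = "\<lambda>t. - (t^2 / a + 2 * t / a^2 + 2 / a^3) * exp (-a * (t - c))"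
  have "((\<lambda>t. t^2 * exp (-a * (t - c))) has_integral - ?F c) {c..}"
  proof (rule has_integral_atLeast_antiderivative[where F = ?F])
    show "(?F has_real_derivative t^2 * exp (-a * (t - c))) (at t)" for t
      using assms
      by (auto intro!: derivative_eq_intros simp: field_simps power2_eq_square power3_eq_cube)
    show "(?F \<longlongrightarrow> 0) at_top" using assms by real_asymp
  qed (auto intro!: continuous_intros)
  moreover have "- ?F c = (c^2 * a^2 + 2 * c * a + 2) / a^3"
    using assms by (simp add: field_simps power2_eq_square power3_eq_cube)
  ultimately show ?thesis by simp
qed

definition rate_sum :: "real \<Rightarrow> real \<Rightarrow> nat \<Rightarrow> nat \<Rightarrow> (real \<Rightarrow> real) \<Rightarrow> real" where
  "rate_sum ls ld N h J = (\<Sum>j<h. Bc N h j * ld / Uc N h j * J (Hc ls ld N h j))"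

text \<open>
  For \<open>J a = exp (-a * (t - c))\<close> this is N times the density of T_D on C_S2 at \<open>t \<ge> c\<close>, a signed
  combination of exponentials with rates H_{h,j} (lemma mixture_sum_exp_eq). For
  J a the integral of \<open>g t * exp (-a * (t - c))\<close> over \<open>t \<ge> c\<close>, it is therefore N times the integral
  of g against that density.
\<close>
definition mixture_sum :: "real \<Rightarrow> real \<Rightarrow> nat \<Rightarrow> nat \<Rightarrow> (real \<Rightarrow> real) \<Rightarrow> real" where
  "mixture_sum ls ld N K J = real K * rate_sum ls ld N K J - (\<Sum>h\<in>{1..K}. rate_sum ls ld N h J)"

lemma Uc_pos: "h \<le> N \<Longrightarrow> Uc N h j > 0"
  by (simp add: Uc_def)

lemma Hc_pos: "h \<le> N \<Longrightarrow> ls \<ge> 0 \<Longrightarrow> ld > 0 \<Longrightarrow> Hc ls ld N h j > 0"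
  using Uc_pos[of h N j] by (simp add: Hc_def add_nonneg_pos)

lemma exp_mult_exp_power_eq_exp_Hc:
  assumes "h \<le> N"
  shows "exp (-ld * s) * exp (-ls * s) ^ (N - h + 1 + j) = exp (- Hc ls ld N h j * s)"
proof -
  have "Uc N h j = real (N - h + 1 + j)" using assms by (simp add: Uc_def)
  then show ?thesis
    by (simp add: Hc_def flip: exp_of_nat_mult exp_add) (simp add: algebra_simps)
qed

lemma binomial_less_exp_eq_rate_sum:
  assumes "1 \<le> h" "h \<le> N"
  shows "ld * exp (-ld * s) * binomial_less N h (1 - exp (-ls * s)) = rate_sum ls ld N h (\<lambda>a. exp (-a * s))"
  unfolding binomial_less_compl_eq_sum_Bc[OF assms] rate_sum_def sum_distrib_left
proof (intro sum.cong refl)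
  fix j
  show "ld * exp (-ld * s) * (Bc N h j * exp (-ls * s) ^ (N - h + 1 + j) / Uc N h j)
      = Bc N h j * ld / Uc N h j * exp (- Hc ls ld N h j * s)"
    using exp_mult_exp_power_eq_exp_Hc[OF assms(2), of ld s ls j, symmetric] by simp
qed

lemma mixture_sum_exp_eq:
  assumes "1 \<le> K" "K \<le> N"
  shows "real N * (ld * exp (-ld * s) * ((1 - exp (-ls * s)) * binomial_less (N - 1) (K - 1) (1 - exp (-ls * s))))
           = mixture_sum ls ld N K (\<lambda>a. exp (-a * s))"
proof -
  let ?p = "1 - exp (-ls * s)"
  have K_mem: "K \<in> {1..K}" using assms by simp
  have "real N * (ld * exp (-ld * s) * (?p * binomial_less (N - 1) (K - 1) ?p))
      = ld * exp (-ld * s) * (real K * binomial_less N K ?p - (\<Sum>h\<in>{1..K}. binomial_less N h ?p))"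
    using binomial_less_telescope[OF assms(1), of N ?p] by (simp add: mult_ac)
  also have "\<dots> = real K * (ld * exp (-ld * s) * binomial_less N K ?p)
      - (\<Sum>h\<in>{1..K}. ld * exp (-ld * s) * binomial_less N h ?p)"
    by (simp add: algebra_simps sum_distrib_left)
  also have "\<dots> = mixture_sum ls ld N K (\<lambda>a. exp (-a * s))"
  proof -
    have rate: "ld * exp (-ld * s) * binomial_less N h ?p = rate_sum ls ld N h (\<lambda>a. exp (-a * s))"
      if "h \<in> {1..K}" for h
      using that assms by (intro binomial_less_exp_eq_rate_sum) auto
    have "(\<Sum>h\<in>{1..K}. ld * exp (-ld * s) * binomial_less N h ?p)
        = (\<Sum>h\<in>{1..K}. rate_sum ls ld N h (\<lambda>a. exp (-a * s)))"
      by (rule sum.cong[OF refl rate])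
    then show ?thesis
      unfolding mixture_sum_def rate[OF K_mem] by simp
  qed
  finally show ?thesis .
qed

lemma mult_mixture_sum: "r * mixture_sum ls ld N K J = mixture_sum ls ld N K (\<lambda>a. r * J a)"
  by (simp add: mixture_sum_def rate_sum_def sum_distrib_left right_diff_distrib mult_ac)

lemma has_integral_mixture_sum:
  assumes "K \<le> N" "ls \<ge> 0" "ld > 0"
    and "\<And>a. a > 0 \<Longrightarrow> (g a has_integral J a) S"
  shows "((\<lambda>t. mixture_sum ls ld N K (\<lambda>a. g a t)) has_integral mixture_sum ls ld N K J) S"
proof -
  have "((\<lambda>t. rate_sum ls ld N h (\<lambda>a. g a t)) has_integral rate_sum ls ld N h J) S" if "h \<le> N" for h
    unfolding rate_sum_def
    using assms that by (intro has_integral_sum has_integral_mult_right assms(4) Hc_pos) auto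
  then show ?thesis
    unfolding mixture_sum_def
    using assms by (intro has_integral_diff has_integral_mult_right has_integral_sum) auto
qed

lemma mixture_sum_divide_power:
  "mixture_sum ls ld N K (\<lambda>a. P a / a ^ m)
     = real K * (\<Sum>j<K. Bc N K j * ld * P (Hc ls ld N K j) / (Uc N K j * Hc ls ld N K j ^ m))
       - (\<Sum>h\<in>{1..K}. \<Sum>j<h. Bc N h j * ld * P (Hc ls ld N h j) / (Uc N h j * Hc ls ld N h j ^ m))"
  by (simp add: mixture_sum_def rate_sum_def)

lemma Rc_eq_rate_sum:
  assumes "h \<le> N" "ls \<ge> 0" "ld > 0"
  shows "Rc ls ld N h = rate_sum ls ld N h (\<lambda>a. 1 / a)"
  unfolding Rc_def rate_sum_def
proof (intro sum.cong refl)
  fix j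
  have "Uc N h j > 0" "Hc ls ld N h j > 0"
    using assms by (auto intro: Uc_pos Hc_pos)
  then show "Bc N h j * (1 / Uc N h j - ls / Hc ls ld N h j) = Bc N h j * ld / Uc N h j * (1 / Hc ls ld N h j)"
    by (simp add: Hc_def field_simps)
qed

section \<open>The deadline model\<close>

locale deadline_multicast = prob_space M for M :: "'a measure" +
  fixes T :: "nat \<Rightarrow> 'a \<Rightarrow> real" and TD :: "'a \<Rightarrow> real" and N K n :: nat and ls ld c :: real
  assumes K_bounds: "1 \<le> K" "K \<le> N"
    and ls_pos: "ls > 0" and ld_pos: "ld > 0" and c_pos: "c > 0"
    and indep: "indep_vars (\<lambda>_. borel) (\<lambda>i. if i = 0 then TD else T i) {0..N}"
    and T_cdf: "\<And>i t. i \<in> {1..N} \<Longrightarrow>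
           prob {x \<in> space M. T i x \<le> t} = (if t > c then 1 - exp (- ls * (t - c)) else 0)"
    and TD_density: "distributed M lborel TD (\<lambda>t. ennreal (if t > c then ld * exp (- ld * (t - c)) else 0))"
    and n_index: "n \<in> {1..N}"
begin

definition T_vec :: "'a \<Rightarrow> nat \<Rightarrow> real" where
  "T_vec x = (\<lambda>i\<in>{1..N}. T i x)"

definition C_S2 :: "'a set" where
  "C_S2 = {x \<in> space M. T n x \<le> TD x \<and> card {i \<in> {1..N}. T i x \<le> TD x} < K}"

lemma C_S2_eq_order_stat:
  "{x \<in> space M. TD x < order_stat N T K x \<and> T n x \<le> min (TD x) (order_stat N T K x)} = C_S2"
  unfolding C_S2_def
proof (intro Collect_cong)
  fix x
  show "(x \<in> space M \<and> TD x < order_stat N T K x \<and> T n x \<le> min (TD x) (order_stat N T K x))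
      \<longleftrightarrow> (x \<in> space M \<and> T n x \<le> TD x \<and> card {i \<in> {1..N}. T i x \<le> TD x} < K)"
    unfolding less_order_stat_iff_card[OF K_bounds, symmetric] by (auto simp: min_def)
qed

lemma measurable_TD[measurable]: "TD \<in> borel_measurable M"
  using distributed_measurable[OF TD_density] by simp

lemma measurable_T_vec[measurable]: "T_vec \<in> measurable M (PiM {1..N} (\<lambda>_. borel))"
proof -
  have "T i \<in> borel_measurable M" if "i \<in> {1..N}" for i
    using indep that unfolding indep_vars_def by (metis atLeastAtMost_iff le0 not_one_le_zero)
  then show ?thesis
    unfolding T_vec_def by (intro measurable_restrict) auto
qed

text \<open>\<^const>\<open>indep_var\<close> needs both variables in the same space, hence T_D as a vector indexed by {0}.\<close>
lemma indep_TD_T_vec: "indep_var (PiM {0} (\<lambda>_. borel)) (\<lambda>x. \<lambda>i\<in>{0}. TD x) (PiM {1..N} (\<lambda>_. borel)) T_vec"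
proof -
  have "indep_var (PiM {0} (\<lambda>_. borel)) (\<lambda>x. \<lambda>i\<in>{0}. (if i = 0 then TD else T i) x)
      (PiM {1..N} (\<lambda>_. borel)) (\<lambda>x. \<lambda>i\<in>{1..N}. (if i = 0 then TD else T i) x)"
    by (rule indep_var_restrict[OF indep]) auto
  moreover have "(\<lambda>x. \<lambda>i\<in>{0}. (if i = 0 then TD else T i) x) = (\<lambda>x. \<lambda>i\<in>{0}. TD x)"
    "(\<lambda>x. \<lambda>i\<in>{1..N}. (if i = 0 then TD else T i) x) = T_vec"
    by (auto simp: T_vec_def intro!: ext restrict_ext)
  ultimately show ?thesis by simp
qed

lemma T_vec_n: "T_vec x n = T n x"
  using n_index by (simp add: T_vec_def)

lemma Collect_T_vec_le: "{i \<in> {1..N}. T_vec x i \<le> t} = {i \<in> {1..N}. T i x \<le> t}"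
  by (auto simp: T_vec_def)

lemma C_S2_eq_T_vec:
  "C_S2 = {x \<in> space M. T_vec x n \<le> TD x \<and> card {i \<in> {1..N}. T_vec x i \<le> TD x} < K}"
  unfolding C_S2_def T_vec_n Collect_T_vec_le ..

lemma sets_C_S2[measurable]: "C_S2 \<in> sets M"
  unfolding C_S2_eq_T_vec
  using measurable_compose[OF measurable_Pair[OF measurable_TD measurable_T_vec]
      pred_le_and_card_le_less[of "{1..N}" n K]] n_index
  by (simp add: pred_def)

definition cdf_T :: "real \<Rightarrow> real" where
  "cdf_T t = (if t > c then 1 - exp (- ls * (t - c)) else 0)"

definition prob_served_by :: "real \<Rightarrow> real" where
  "prob_served_by t = cdf_T t * binomial_less (N - 1) (K - 1) (cdf_T t)"

lemma prob_T_vec_le_and_card_less: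
  "prob {x \<in> space M. T_vec x n \<le> t \<and> card {i \<in> {1..N}. T_vec x i \<le> t} < K} = prob_served_by t"
proof -
  have "indep_vars (\<lambda>_. borel) (\<lambda>i. if i = 0 then TD else T i) {1..N}"
    by (rule indep_vars_subset[OF indep]) auto
  then have "indep_vars (\<lambda>_. borel) T {1..N}"
    by (rule indep_vars_cong[THEN iffD1, rotated -1]) auto
  moreover have "prob {x \<in> space M. T i x \<le> t} = cdf_T t" if "i \<in> {1..N}" for i
    using T_cdf[OF that] by (simp add: cdf_T_def)
  ultimately show ?thesis
    unfolding T_vec_n Collect_T_vec_le prob_served_by_def
    using prob_le_and_card_le_less[OF _ n_index] by simp
qed

lemma prob_served_by_nonneg: "prob_served_by t \<ge> 0"
  unfolding prob_T_vec_le_and_card_less[symmetric] by (rule measure_nonneg)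

lemma measurable_prob_served_by[measurable]: "prob_served_by \<in> borel_measurable borel"
  unfolding prob_served_by_def cdf_T_def binomial_less_def by measurable

lemma TD_density_mult_prob_served_by:
  "ennreal (if t > c then ld * exp (- ld * (t - c)) else 0) * ennreal (t ^ k * prob_served_by t)
     = ennreal (t ^ k * mixture_sum ls ld N K (\<lambda>a. exp (-a * (t - c))) / N) * indicator {c..} t"
proof -
  let ?u = "exp (- ls * (t - c))"
  have "real N > 0" using K_bounds by simp
  then have "t ^ k * mixture_sum ls ld N K (\<lambda>a. exp (-a * (t - c))) / N
      = ld * exp (- ld * (t - c)) * (t ^ k * ((1 - ?u) * binomial_less (N - 1) (K - 1) (1 - ?u)))"
    unfolding mixture_sum_exp_eq[OF K_bounds, symmetric] by simp
  moreover have "cdf_T t = 1 - ?u" if "t \<ge> c" using that by (auto simp: cdf_T_def)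
  ultimately show ?thesis
    using ld_pos by (auto simp: prob_served_by_def cdf_T_def indicator_def ennreal_mult' not_less)
qed

lemma nn_integral_C_S2_moment:
  "(\<integral>\<^sup>+x. ennreal (indicator C_S2 x * TD x ^ k) \<partial>M)
     = (\<integral>\<^sup>+t. ennreal (t ^ k * mixture_sum ls ld N K (\<lambda>a. exp (-a * (t - c))) / N) * indicator {c..} t \<partial>lborel)"
proof -
  define Q where "Q t y \<longleftrightarrow> y n \<le> t \<and> card {i \<in> {1..N}. y i \<le> t} < K"
    for t :: real and y :: "nat \<Rightarrow> real"
  define \<phi> where "\<phi> z = (if Q (fst z 0) (snd z) then ennreal (fst z 0 ^ k) else 0)"
    for z :: "(nat \<Rightarrow> real) \<times> (nat \<Rightarrow> real)"
  have [measurable]: "Measurable.pred (borel \<Otimes>\<^sub>M PiM {1..N} (\<lambda>_. borel)) (\<lambda>(t, y). Q t y)"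
    unfolding Q_def using pred_le_and_card_le_less[of "{1..N}" n K] n_index by simp
  have [measurable]: "\<phi> \<in> borel_measurable (PiM {0} (\<lambda>_. borel) \<Otimes>\<^sub>M PiM {1..N} (\<lambda>_. borel))"
    unfolding \<phi>_def by measurable
  have "(\<integral>\<^sup>+x. ennreal (indicator C_S2 x * TD x ^ k) \<partial>M) = (\<integral>\<^sup>+x. \<phi> (\<lambda>i\<in>{0}. TD x, T_vec x) \<partial>M)"
    by (rule nn_integral_cong) (simp add: \<phi>_def Q_def C_S2_eq_T_vec indicator_def)
  also have "\<dots> = (\<integral>\<^sup>+x. \<integral>\<^sup>+y. \<phi> (\<lambda>i\<in>{0}. TD x, T_vec y) \<partial>M \<partial>M)"
    by (rule nn_integral_indep_var[OF indep_TD_T_vec]) measurable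
  also have "\<dots> = (\<integral>\<^sup>+x. ennreal (TD x ^ k * prob_served_by (TD x)) \<partial>M)"
  proof (rule nn_integral_cong)
    fix x
    have "(\<integral>\<^sup>+y. \<phi> (\<lambda>i\<in>{0}. TD x, T_vec y) \<partial>M)
        = (\<integral>\<^sup>+y. ennreal (TD x ^ k) * indicator {y \<in> space M. Q (TD x) (T_vec y)} y \<partial>M)"
      by (rule nn_integral_cong) (simp add: \<phi>_def indicator_def)
    also have "\<dots> = ennreal (TD x ^ k) * emeasure M {y \<in> space M. Q (TD x) (T_vec y)}"
      by (rule nn_integral_cmult_indicator) measurable
    also have "emeasure M {y \<in> space M. Q (TD x) (T_vec y)} = ennreal (prob_served_by (TD x))"
      unfolding Q_def prob_T_vec_le_and_card_less[symmetric] by (rule emeasure_eq_measure)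
    also have "ennreal (TD x ^ k) * ennreal (prob_served_by (TD x)) = ennreal (TD x ^ k * prob_served_by (TD x))"
      by (rule ennreal_mult''[symmetric, OF prob_served_by_nonneg])
    finally show "(\<integral>\<^sup>+y. \<phi> (\<lambda>i\<in>{0}. TD x, T_vec y) \<partial>M) = ennreal (TD x ^ k * prob_served_by (TD x))" .
  qed
  also have "\<dots> = (\<integral>\<^sup>+t. ennreal (if t > c then ld * exp (- ld * (t - c)) else 0)
                         * ennreal (t ^ k * prob_served_by t) \<partial>lborel)"
    by (rule distributed_nn_integral[OF TD_density, symmetric]) measurable
  finally show ?thesis
    by (simp only: TD_density_mult_prob_served_by)
qed

lemma has_bochner_integral_C_S2_moment:
  assumes J: "\<And>a. a > 0 \<Longrightarrow> ((\<lambda>t. t ^ k * exp (-a * (t - c))) has_integral J a) {c..}"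
  shows "has_bochner_integral M (\<lambda>x. indicator C_S2 x * TD x ^ k) (mixture_sum ls ld N K J / N)"
proof -
  let ?g = "\<lambda>t. t ^ k * mixture_sum ls ld N K (\<lambda>a. exp (-a * (t - c))) / N"
  have "((\<lambda>t. mixture_sum ls ld N K (\<lambda>a. t ^ k * exp (-a * (t - c)))) has_integral mixture_sum ls ld N K J) {c..}"
    using K_bounds ls_pos ld_pos J by (intro has_integral_mixture_sum) auto
  then have int: "(?g has_integral mixture_sum ls ld N K J / N) {c..}"
    by (intro has_integral_divide) (simp add: mult_mixture_sum)
  have nonneg: "?g t \<ge> 0" if "t \<in> {c..}" for t
  proof -
    let ?u = "exp (- ls * (t - c))"
    have "0 \<le> ?u" "?u \<le> 1" using that ls_pos by auto
    then have "0 \<le> real N * (ld * exp (- ld * (t - c)) * ((1 - ?u) * binomial_less (N - 1) (K - 1) (1 - ?u)))"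
      using ld_pos by (intro mult_nonneg_nonneg binomial_less_nonneg) auto
    then show ?thesis
      unfolding mixture_sum_exp_eq[OF K_bounds] using that c_pos by simp
  qed
  have "AE x in M. TD x > c"
  proof -
    have "AE t in lborel. 0 < ennreal (if t > c then ld * exp (- ld * (t - c)) else 0) \<longrightarrow> c < t"
      by auto
    then show ?thesis using distributed_AE2[OF TD_density] by simp
  qed
  then have "AE x in M. 0 \<le> indicator C_S2 x * TD x ^ k"
    by eventually_elim (use c_pos in simp)
  moreover have "(\<integral>\<^sup>+x. ennreal (indicator C_S2 x * TD x ^ k) \<partial>M) = ennreal (mixture_sum ls ld N K J / N)"
    unfolding nn_integral_C_S2_moment by (rule nn_integral_has_integral_lebesgue'[OF nonneg int])
  moreover have "0 \<le> mixture_sum ls ld N K J / N"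
    by (rule has_integral_nonneg[OF int nonneg])
  ultimately show ?thesis
    by (intro has_bochner_integral_nn_integral) auto
qed

lemma cond_exp_event_C_S2:
  assumes "\<And>a. a > 0 \<Longrightarrow> ((\<lambda>t. t ^ k * exp (-a * (t - c))) has_integral J a) {c..}"
  shows "cond_exp_event M (\<lambda>x. TD x ^ k) C_S2 = mixture_sum ls ld N K J / mixture_sum ls ld N K (\<lambda>a. 1 / a)"
proof -
  have "has_bochner_integral M (\<lambda>x. indicator C_S2 x * TD x ^ 0) (mixture_sum ls ld N K (\<lambda>a. 1 / a) / N)"
    by (rule has_bochner_integral_C_S2_moment) (use has_integral_shifted_exp in simp)
  then have "measure M C_S2 = mixture_sum ls ld N K (\<lambda>a. 1 / a) / N"
    by (simp add: has_bochner_integral_iff)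
  moreover have "(\<integral>x. indicator C_S2 x * TD x ^ k \<partial>M) = mixture_sum ls ld N K J / N"
    using has_bochner_integral_C_S2_moment[OF assms] by (simp add: has_bochner_integral_iff)
  moreover have "real N > 0" using K_bounds by simp
  ultimately show ?thesis
    by (simp add: cond_exp_event_def)
qed

end

theorem proposition6:
  fixes M :: "'a measure" and C :: "'a set" and T :: "nat \<Rightarrow> 'a \<Rightarrow> real" and TD :: "'a \<Rightarrow> real"
    and N K n :: nat and ls ld c :: real
  assumes "prob_space M"
    and "1 \<le> N" and "1 \<le> K" and "K \<le> N"
    and "ls > 0" and "ld > 0" and "c > 0"
    and "prob_space.indep_vars M (\<lambda>_. borel) (\<lambda>i. if i = 0 then TD else T i) {0..N}"
    and "\<And>i t. i \<in> {1..N} \<Longrightarrow>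
           measure M {x \<in> space M. T i x \<le> t} = (if t > c then 1 - exp (- ls * (t - c)) else 0)"
    and "distributed M lborel TD (\<lambda>t. ennreal (if t > c then ld * exp (- ld * (t - c)) else 0))"
    and "n \<in> {1..N}"
    and "C = {x \<in> space M. TD x < order_stat N T K x \<and>
                 T n x \<le> min (TD x) (order_stat N T K x)}"
    and "measure M C > 0"
  shows "(cond_exp_event M TD C =
           (real K * (\<Sum>j<K. Bc N K j * ld * (c * Hc ls ld N K j + 1)
                               / (Uc N K j * (Hc ls ld N K j)^2))
            - (\<Sum>h\<in>{1..K}. \<Sum>j<h. Bc N h j * ld * (c * Hc ls ld N h j + 1)
                               / (Uc N h j * (Hc ls ld N h j)^2)))
           / (real K * Rc ls ld N K - (\<Sum>h\<in>{1..K}. Rc ls ld N h))) \<and>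
         (cond_exp_event M (\<lambda>x. (TD x)^2) C =
           (real K * (\<Sum>j<K. Bc N K j * ld * (c^2 * (Hc ls ld N K j)^2 + 2 * c * Hc ls ld N K j + 2)
                               / (Uc N K j * (Hc ls ld N K j)^3))
            - (\<Sum>h\<in>{1..K}. \<Sum>j<h. Bc N h j * ld * (c^2 * (Hc ls ld N h j)^2 + 2 * c * Hc ls ld N h j + 2)
                               / (Uc N h j * (Hc ls ld N h j)^3)))
           / (real K * Rc ls ld N K - (\<Sum>h\<in>{1..K}. Rc ls ld N h)))"
proof -
  interpret deadline_multicast M T TD N K n ls ld c
    by (intro deadline_multicast.intro deadline_multicast_axioms.intro assms(1,3-11))
  have C: "C = C_S2"
    unfolding assms(12) by (rule C_S2_eq_order_stat)
  have "real K * Rc ls ld N K - (\<Sum>h\<in>{1..K}. Rc ls ld N h) = mixture_sum ls ld N K (\<lambda>a. 1 / a)"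
    using K_bounds ls_pos ld_pos by (simp add: mixture_sum_def Rc_eq_rate_sum)
  moreover have "cond_exp_event M TD C_S2 = mixture_sum ls ld N K (\<lambda>a. (c * a + 1) / a^2) / mixture_sum ls ld N K (\<lambda>a. 1 / a)"
    using cond_exp_event_C_S2[of 1] has_integral_mult_shifted_exp c_pos by simp
  moreover have "cond_exp_event M (\<lambda>x. (TD x)^2) C_S2
      = mixture_sum ls ld N K (\<lambda>a. (c^2 * a^2 + 2 * c * a + 2) / a^3) / mixture_sum ls ld N K (\<lambda>a. 1 / a)"
    using cond_exp_event_C_S2[of 2] has_integral_power2_mult_shifted_exp by simp
  ultimately show ?thesis
    unfolding C mixture_sum_divide_power by simp
qed

end
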